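(* Let $p$ be a prime, $n,s,m\ge2$, and $a,b,c,d,e,f\in\mathbb{Z}_p$. Then $T_{RN}$ is invertible over $\mathbb{Z}_p$ if and only if $$ 0\notin\mathbf{R}_{n;c,d}+\mathbf{R}_{s;a,b}+\mathbf{R}_{m;e,f}. $$
   Context: For $k\ge1$ and $t_1,t_2\in\mathbb{Z}_p$, $S_k(t_1,t_2)$ is the $k\times k$ tridiagonal matrix with zeros on the main diagonal, every subdiagonal entry (positions $(i+1,i)$) equal to $t_1$, and every superdiagonal entry (positions $(i,i+1)$) equal to $t_2$. $I_r$ is the $r\times r$ identity and $\otimes$ the Kronecker product. $M_s=I_s\otimes S_n(c,d)+S_s(a,b)\otimes I_n$ and $T_{RN}=I_m\otimes M_s+S_m(f,e)\otimes I_{ns}$. For $j\ge0$, $g_{j;t_1,t_2}(x)=\sum_{i=0}^{\lfloor j/2\rfloor}(-1)^i(t_1t_2)^i\binom{j-i}{i}x^{j-2i}$. $\mathbb{E}$ is the splitting field over $\mathbb{Z}_p$ of $g_{n;c,d},g_{s;a,b},g_{m;e,f}$ reduced mod $p$, and $\mathbf{R}_{j;t_1,t_2}$ is the set of roots in $\mathbb{E}$ of $g_{j;t_1,t_2}$ mod $p$. Minkowski sum: $S_1+S_2+S_3=\{x_1+x_2+x_3:x_i\in S_i\}$. *)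

theory Defs
  imports "Berlekamp_Zassenhaus.Finite_Field" "Jordan_Normal_Form.Matrix"
    "HOL-Computational_Algebra.Polynomial"
begin

definition tridiag :: "nat \<Rightarrow> 'a::zero \<Rightarrow> 'a \<Rightarrow> 'a mat" where
  "tridiag k t1 t2 = mat k k (\<lambda>(i,j). if i = j + 1 then t1 else if j = i + 1 then t2 else 0)"

definition kron :: "'a::times mat \<Rightarrow> 'a mat \<Rightarrow> 'a mat" where
  "kron A B = mat (dim_row A * dim_row B) (dim_col A * dim_col B)
     (\<lambda>(i,j). A $$ (i div dim_row B, j div dim_col B) * B $$ (i mod dim_row B, j mod dim_col B))"

definition M_s :: "nat \<Rightarrow> nat \<Rightarrow> 'a::comm_ring_1 \<Rightarrow> 'a \<Rightarrow> 'a \<Rightarrow> 'a \<Rightarrow> 'a mat" where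
  "M_s n s a b c d = kron (1\<^sub>m s) (tridiag n c d) + kron (tridiag s a b) (1\<^sub>m n)"

definition T_RN :: "nat \<Rightarrow> nat \<Rightarrow> nat \<Rightarrow> 'a::comm_ring_1 \<Rightarrow> 'a \<Rightarrow> 'a \<Rightarrow> 'a \<Rightarrow> 'a \<Rightarrow> 'a \<Rightarrow> 'a mat" where
  "T_RN n s m a b c d e f = kron (1\<^sub>m m) (M_s n s a b c d) + kron (tridiag m f e) (1\<^sub>m (n * s))"

definition gpoly :: "nat \<Rightarrow> 'a::comm_ring_1 \<Rightarrow> 'a \<Rightarrow> 'a poly" where
  "gpoly j t1 t2 = (\<Sum>i = 0..j div 2.
      monom ((-1) ^ i * (t1 * t2) ^ i * of_nat ((j - i) choose i)) (j - 2 * i))"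

text \<open>Canonical map Z_p \<rightarrow> a field of characteristic p (reduction mod p).\<close>
definition emb :: "'p::finite mod_ring \<Rightarrow> 'e::field" where
  "emb x = of_int (to_int_mod_ring x)"

definition splits :: "'e::field poly \<Rightarrow> bool" where
  "splits q \<longleftrightarrow> (\<exists>c rs. q = smult c (prod_mset (image_mset (\<lambda>r. [:- r, 1:]) rs)))"

definition gen_subfield :: "'e::field set \<Rightarrow> 'e set" where
  "gen_subfield S = \<Inter>{K. S \<subseteq> K \<and> 0 \<in> K \<and> 1 \<in> K \<and>
      (\<forall>x\<in>K. \<forall>y\<in>K. x + y \<in> K \<and> x - y \<in> K \<and> x * y \<in> K) \<and> (\<forall>x\<in>K. inverse x \<in> K)}"

definition roots :: "'e::field poly \<Rightarrow> 'e set" where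
  "roots q = {x. poly q x = 0}"

definition is_splitting_field :: "'e::field itself \<Rightarrow> 'p::prime_card mod_ring poly set \<Rightarrow> bool" where
  "is_splitting_field _ P \<longleftrightarrow> CHAR('e) = CARD('p) \<and>
     (\<forall>q\<in>P. splits (map_poly (emb :: 'p mod_ring \<Rightarrow> 'e) q)) \<and>
     gen_subfield (\<Union>q\<in>P. roots (map_poly (emb :: 'p mod_ring \<Rightarrow> 'e) q)) = UNIV"

end

theory Submission
  imports Defs "Jordan_Normal_Form.Schur_Decomposition" "Jordan_Normal_Form.DL_Rank"
begin

text \<open>
  The characteristic polynomial of \<open>S\<^sub>k(t\<^sub>1,t\<^sub>2)\<close> is \<open>g\<^sub>k;t\<^sub>1,t\<^sub>2\<close>: both satisfy the
  three-term recurrence of Dickson polynomials of the second kind.  Over the splitting field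
  each of the three tridiagonal matrices is therefore similar to an upper triangular matrix
  whose diagonal lists the roots of its \<open>g\<close>-polynomial.  Conjugating by Kronecker
  products of the three similarity transformations turns \<open>T\<^sub>R\<^sub>N\<close>, a Kronecker sum, into
  the Kronecker sum of the triangular matrices, which is again upper triangular and carries
  all sums \<open>x\<^sub>1 + x\<^sub>2 + x\<^sub>3\<close> of roots on its diagonal.  Hence its determinant vanishes iff
  some such sum is zero; reduction mod \<open>p\<close> is an injective ring map and commutes with
  the determinant.  The argument works for all sizes.
\<close>

section \<open>Tridiagonal Toeplitz determinants\<close>

definition tridiag_toeplitz :: "nat \<Rightarrow> 'a \<Rightarrow> 'a \<Rightarrow> 'a \<Rightarrow> 'a::zero mat" where
  "tridiag_toeplitz k \<alpha> \<beta> \<gamma> = mat k k (\<lambda>(i,j).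
     if i = j then \<alpha> else if i = j + 1 then \<beta> else if j = i + 1 then \<gamma> else 0)"

lemma tridiag_toeplitz_carrier [simp]: "tridiag_toeplitz k \<alpha> \<beta> \<gamma> \<in> carrier_mat k k"
  by (simp add: tridiag_toeplitz_def)

lemma det_tridiag_toeplitz_Suc_Suc:
  fixes \<alpha> \<beta> \<gamma> :: "'a::comm_ring_1"
  shows "det (tridiag_toeplitz (Suc (Suc k)) \<alpha> \<beta> \<gamma>)
    = \<alpha> * det (tridiag_toeplitz (Suc k) \<alpha> \<beta> \<gamma>) - \<beta> * \<gamma> * det (tridiag_toeplitz k \<alpha> \<beta> \<gamma>)"
proof -
  let ?T = "tridiag_toeplitz :: nat \<Rightarrow> 'a \<Rightarrow> 'a \<Rightarrow> 'a \<Rightarrow> 'a mat"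
  let ?A = "?T (Suc (Suc k)) \<alpha> \<beta> \<gamma>"
  \<comment> \<open>expand along the last column; in the minor \<open>?N\<close> of the entry \<open>(k, k+1)\<close>
      the last row has the single nonzero entry \<open>\<beta>\<close>\<close>
  let ?N = "mat_delete ?A k (Suc k)"
  have N: "?N \<in> carrier_mat (Suc k) (Suc k)"
    by (simp add: mat_delete_def tridiag_toeplitz_def)
  have delete_N: "mat_delete ?N k k = ?T k \<alpha> \<beta> \<gamma>"
    by (rule eq_matI, auto simp: mat_delete_def tridiag_toeplitz_def)
  have delete_A: "mat_delete ?A (Suc k) (Suc k) = ?T (Suc k) \<alpha> \<beta> \<gamma>"
    by (rule eq_matI, auto simp: mat_delete_def tridiag_toeplitz_def)
  have "det ?N = (\<Sum>j<Suc k. ?N $$ (k,j) * cofactor ?N k j)"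
    by (rule laplace_expansion_row[OF N], simp)
  also have "\<dots> = ?N $$ (k,k) * cofactor ?N k k"
    unfolding sum.lessThan_Suc
    by (subst sum.neutral, auto simp: mat_delete_def tridiag_toeplitz_def)
  finally have det_N: "det ?N = \<beta> * det (?T k \<alpha> \<beta> \<gamma>)"
    unfolding cofactor_def delete_N by (simp add: mat_delete_def tridiag_toeplitz_def)
  have "det ?A = (\<Sum>i<Suc (Suc k). ?A $$ (i, Suc k) * cofactor ?A i (Suc k))"
    by (rule laplace_expansion_column[OF tridiag_toeplitz_carrier], simp)
  also have "\<dots> = ?A $$ (Suc k, Suc k) * cofactor ?A (Suc k) (Suc k)
      + ?A $$ (k, Suc k) * cofactor ?A k (Suc k)"
    unfolding sum.lessThan_Suc by (subst sum.neutral, auto simp: tridiag_toeplitz_def)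
  finally show ?thesis
    unfolding cofactor_def det_N delete_A by (simp add: tridiag_toeplitz_def)
qed

text \<open>The Dickson polynomial of the second kind \<open>E\<^sub>k(x,q)\<close>, evaluated in any commutative
  ring; terms with \<open>2i > k\<close> vanish because their binomial coefficient does.\<close>
definition dickson2 :: "nat \<Rightarrow> 'a \<Rightarrow> 'a \<Rightarrow> 'a::comm_ring_1" where
  "dickson2 k x q = (\<Sum>i\<le>k. (-q)^i * of_nat ((k - i) choose i) * x^(k - 2*i))"

lemma dickson2_0 [simp]: "dickson2 0 x q = 1"
  and dickson2_1 [simp]: "dickson2 (Suc 0) x q = x"
  by (simp_all add: dickson2_def)

lemma x_times_dickson2_Suc:
  "x * dickson2 (Suc k) x q
    = x^Suc (Suc k) + (\<Sum>i\<le>k. (-q)^Suc i * of_nat ((k - i) choose Suc i) * x^(k - 2*i))"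
proof -
  have "x * dickson2 (Suc k) x q
      = x^Suc (Suc k) + (\<Sum>i\<le>k. x * ((-q)^Suc i * of_nat ((k - i) choose Suc i) * x^(k - Suc (2*i))))"
    unfolding dickson2_def by (subst sum.atMost_Suc_shift, simp add: sum_distrib_left algebra_simps)
  also have "(\<Sum>i\<le>k. x * ((-q)^Suc i * of_nat ((k - i) choose Suc i) * x^(k - Suc (2*i))))
      = (\<Sum>i\<le>k. (-q)^Suc i * of_nat ((k - i) choose Suc i) * x^(k - 2*i))"
  proof (rule sum.cong[OF refl])
    fix i
    show "x * ((-q)^Suc i * of_nat ((k - i) choose Suc i) * x^(k - Suc (2*i)))
        = (-q)^Suc i * of_nat ((k - i) choose Suc i) * x^(k - 2*i)"
    proof (cases "k - i < Suc i")
      case True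
      then show ?thesis by (simp add: binomial_eq_0)
    next
      case False
      then have "k - 2*i = Suc (k - Suc (2*i))" by auto
      then show ?thesis by (simp add: algebra_simps)
    qed
  qed
  finally show ?thesis .
qed

lemma dickson2_Suc_Suc:
  "dickson2 (Suc (Suc k)) x q = x * dickson2 (Suc k) x q - q * dickson2 k x q"
proof -
  have "dickson2 (Suc (Suc k)) x q
      = x^Suc (Suc k) + (\<Sum>i\<le>k. (-q)^Suc i * of_nat ((Suc k - i) choose Suc i) * x^(k - 2*i))"
    unfolding dickson2_def by (subst sum.atMost_Suc_shift, subst sum.atMost_Suc, simp)
  also have "\<dots> = x^Suc (Suc k)
      + (\<Sum>i\<le>k. (-q)^Suc i * of_nat ((k - i) choose i) * x^(k - 2*i))
      + (\<Sum>i\<le>k. (-q)^Suc i * of_nat ((k - i) choose Suc i) * x^(k - 2*i))"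
    \<comment> \<open>Pascal's rule \<open>C(k+1-i, i+1) = C(k-i, i) + C(k-i, i+1)\<close>\<close>
    by (simp add: sum.distrib[symmetric] Suc_diff_le algebra_simps)
  also have "(\<Sum>i\<le>k. (-q)^Suc i * of_nat ((k - i) choose i) * x^(k - 2*i)) = - q * dickson2 k x q"
    unfolding dickson2_def by (simp add: sum_distrib_left algebra_simps)
  finally show ?thesis
    by (simp add: x_times_dickson2_Suc algebra_simps)
qed

lemma det_tridiag_toeplitz:
  "det (tridiag_toeplitz k x (-\<beta>) (-\<gamma>)) = dickson2 k x (\<beta> * \<gamma>)"
proof -
  have "det (tridiag_toeplitz k x (-\<beta>) (-\<gamma>)) = dickson2 k x (\<beta> * \<gamma>)
      \<and> det (tridiag_toeplitz (Suc k) x (-\<beta>) (-\<gamma>)) = dickson2 (Suc k) x (\<beta> * \<gamma>)"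
  proof (induction k)
    case 0
    have "det (tridiag_toeplitz (Suc 0) x (-\<beta>) (-\<gamma>)) = x"
      by (subst det_single, auto simp: tridiag_toeplitz_def)
    then show ?case by (simp add: det_dim_zero)
  next
    case (Suc k)
    then show ?case by (simp add: det_tridiag_toeplitz_Suc_Suc dickson2_Suc_Suc)
  qed
  then show ?thesis ..
qed

lemma gpoly_eq_dickson2: "gpoly j t1 t2 = dickson2 j [:0, 1:] [:t1 * t2:]"
proof -
  have "dickson2 j [:0, 1:] [:t1 * t2:]
      = (\<Sum>i\<le>j. monom ((-1)^i * (t1 * t2)^i * of_nat ((j - i) choose i)) (j - 2*i))"
    unfolding dickson2_def
    by (intro sum.cong refl, simp add: monom_altdef poly_const_pow of_nat_poly
        power_minus[of "[:t1 * t2:]"] power_minus[of "t1 * t2"] mult_ac)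
  also have "\<dots> = gpoly j t1 t2"
    unfolding gpoly_def by (rule sum.mono_neutral_right, auto simp: binomial_eq_0)
  finally show ?thesis ..
qed

lemma tridiag_carrier [simp]: "tridiag k t1 t2 \<in> carrier_mat k k"
  by (simp add: tridiag_def)

lemma dim_tridiag [simp]: "dim_row (tridiag k t1 t2) = k" "dim_col (tridiag k t1 t2) = k"
  by (simp_all add: tridiag_def)

lemma gpoly_commute: "gpoly k t1 t2 = gpoly k t2 t1"
  unfolding gpoly_def by (simp add: mult.commute)

lemma char_poly_tridiag: "char_poly (tridiag k t1 t2) = gpoly k t1 t2"
proof -
  have char_matrix: "char_poly_matrix (tridiag k t1 t2) = tridiag_toeplitz k [:0, 1:] (-[:t1:]) (-[:t2:])"
    by (rule eq_matI, auto simp: char_poly_matrix_def tridiag_def tridiag_toeplitz_def)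
  show ?thesis
    unfolding char_poly_def char_matrix det_tridiag_toeplitz gpoly_eq_dickson2 by (simp add: mult.commute)
qed

section \<open>Triangularization over an arbitrary field\<close>

lemma invertible_mat_with_first_col:
  fixes v :: "'a::field vec"
  assumes v: "v \<in> carrier_vec n" and v0: "v \<noteq> 0\<^sub>v n"
  obtains W W' where "W \<in> carrier_mat n n" "W' \<in> carrier_mat n n"
    "W' * W = 1\<^sub>m n" "W * W' = 1\<^sub>m n" "col W 0 = v"
proof -
  interpret vec_space "TYPE('a)" n .
  define b where "b = basis_completion v"
  define W where "W = mat_of_cols n b"
  from basis_completion[OF v v0, folded b_def]
  have dist: "distinct b" and indep: "\<not> lin_dep (set b)" and b: "set b \<subseteq> carrier_vec n"
    and hd: "hd b = v" and len: "length b = n" by auto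
  have W: "W \<in> carrier_mat n n" unfolding W_def using len by auto
  have "det W \<noteq> 0"
  proof
    assume "det W = 0"
    then obtain u where "u \<in> carrier_vec n" "u \<noteq> 0\<^sub>v n" "W *\<^sub>v u = 0\<^sub>v n"
      unfolding det_0_iff_vec_prod_zero_field[OF W] by auto
    from lin_depI[OF W this] dist indep b show False
      unfolding W_def by simp
  qed
  from det_non_zero_imp_unit[OF W this, of "()"]
  obtain W' where "W' \<in> carrier_mat n n" "W' * W = 1\<^sub>m n" "W * W' = 1\<^sub>m n"
    unfolding Units_def ring_mat_def by auto
  moreover have "n \<noteq> 0" using v v0 by auto
  then have "col W 0 = v" unfolding W_def using hd len b by (cases b, auto)
  ultimately show thesis using W that by blast
qed

text \<open>Changing to a basis whose first vector is an eigenvector splits off a \<open>1 \<times> 1\<close> block.\<close>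
lemma similar_mat_eigenvalue_block:
  fixes A :: "'a::field mat"
  assumes A: "A \<in> carrier_mat (Suc k) (Suc k)" and e: "eigenvalue A e"
  obtains A2 A3 where "A2 \<in> carrier_mat 1 k" "A3 \<in> carrier_mat k k"
    "similar_mat A (four_block_mat (mat 1 1 (\<lambda>_. e)) A2 (0\<^sub>m k 1) A3)"
proof -
  let ?v = "find_eigenvector A e"
  from find_eigenvector[OF A e] A
  have v: "?v \<in> carrier_vec (Suc k)" "?v \<noteq> 0\<^sub>v (Suc k)" and eigen: "A *\<^sub>v ?v = e \<cdot>\<^sub>v ?v"
    unfolding eigenvector_def by auto
  obtain W W' where W: "W \<in> carrier_mat (Suc k) (Suc k)" and W': "W' \<in> carrier_mat (Suc k) (Suc k)"
    and W'W: "W' * W = 1\<^sub>m (Suc k)" and WW': "W * W' = 1\<^sub>m (Suc k)" and col_W: "col W 0 = ?v"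
    using invertible_mat_with_first_col[OF v] .
  define A' where "A' = W' * A * W"
  have A': "A' \<in> carrier_mat (Suc k) (Suc k)" unfolding A'_def using W W' A by auto
  have "col A' 0 = (W' * A) *\<^sub>v col W 0"
    unfolding A'_def using W W' A by (intro col_mult2[of _ "Suc k" "Suc k"], auto)
  also have "\<dots> = W' *\<^sub>v (A *\<^sub>v col W 0)"
    unfolding col_W using W W' A v(1) by simp
  also have "\<dots> = e \<cdot>\<^sub>v col (W' * W) 0"
    using W W' v by (simp add: eigen mult_mat_vec col_W)
  finally have col0: "col A' 0 = e \<cdot>\<^sub>v unit_vec (Suc k) 0"
    unfolding W'W by simp
  obtain A1 A2 A0 A3 where split: "split_block A' 1 1 = (A1, A2, A0, A3)"
    by (cases "split_block A' 1 1")
  from split_block[OF split, of k k] A'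
  have A2: "A2 \<in> carrier_mat 1 k" and A3: "A3 \<in> carrier_mat k k"
    and A'_eq: "A' = four_block_mat A1 A2 A0 A3" by auto
  have first_col: "A' $$ (i, 0) = (if i = 0 then e else 0)" if "i < Suc k" for i
    using arg_cong[OF col0, of "\<lambda>w. w $ i"] that A' by auto
  have "A1 = mat 1 1 (\<lambda>_. e)" and "A0 = 0\<^sub>m k 1"
    using split first_col A' by (auto simp: split_block_def Let_def intro!: eq_matI)
  moreover have "similar_mat_wit A' A W' W"
    by (rule similar_mat_witI[of _ _ "Suc k"], insert A A' W W' W'W WW', auto simp: A'_def)
  then have "similar_mat A A'"
    unfolding similar_mat_def using similar_mat_wit_sym by blast
  ultimately show thesis using that A2 A3 A'_eq by blast
qed

lemma char_poly_eigenvalue_block: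
  fixes A2 :: "'a::field mat"
  assumes "A2 \<in> carrier_mat 1 k" "A3 \<in> carrier_mat k k"
  shows "char_poly (four_block_mat (mat 1 1 (\<lambda>_. e)) A2 (0\<^sub>m k 1) A3) = [:-e, 1:] * char_poly A3"
proof -
  have "char_poly (mat 1 1 (\<lambda>_. e)) = [:-e, 1:]"
    using char_poly_upper_triangular[of "mat 1 1 (\<lambda>_. e)" 1]
    by (auto simp: diag_mat_def upper_triangular_def)
  then show ?thesis
    by (simp only: char_poly_four_block_zeros_col[OF mat_carrier assms])
qed

lemma similar_mat_carrier: "A \<in> carrier_mat n n \<Longrightarrow> similar_mat A B \<Longrightarrow> B \<in> carrier_mat n n"
  unfolding similar_mat_def similar_mat_wit_def Let_def by auto

text \<open>The library's Schur decomposition needs a conjugatable ordered field; here any field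
  over which the characteristic polynomial splits will do.\<close>
lemma triangularize_split_char_poly:
  fixes A :: "'a::field mat"
  assumes "A \<in> carrier_mat n n" and "char_poly A = (\<Prod>e\<leftarrow>es. [:-e, 1:])"
  shows "\<exists>U. similar_mat A U \<and> upper_triangular U \<and> diag_mat U = es"
  using assms
proof (induction es arbitrary: n A)
  case Nil
  with degree_monic_char_poly[of A n] have "A \<in> carrier_mat 0 0" by auto
  then show ?case
    by (intro exI[of _ A], auto intro: similar_mat_refl simp: diag_mat_def upper_triangular_def)
next
  case (Cons e es n A)
  have monic: "monic (\<Prod>e\<leftarrow>es. [:-e, 1:])" by (rule monic_prod_list, auto)
  have "degree (char_poly A) = Suc (degree (\<Prod>e\<leftarrow>es. [:-e, 1:]))"
    unfolding Cons.prems(2) list.map prod_list.Cons using monic by (subst degree_mult_eq, auto)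
  then obtain k where n: "n = Suc k"
    using degree_monic_char_poly[OF Cons.prems(1)] by auto
  have "eigenvalue A e"
    using Cons.prems unfolding eigenvalue_root_char_poly[OF Cons.prems(1)] by simp
  then obtain A2 A3 where A2: "A2 \<in> carrier_mat 1 k" and A3: "A3 \<in> carrier_mat k k"
    and sim: "similar_mat A (four_block_mat (mat 1 1 (\<lambda>_. e)) A2 (0\<^sub>m k 1) A3)"
    using similar_mat_eigenvalue_block[of A k e] Cons.prems(1) unfolding n by blast
  have "[:-e, 1:] * char_poly A3 = char_poly (four_block_mat (mat 1 1 (\<lambda>_. e)) A2 (0\<^sub>m k 1) A3)"
    by (simp only: char_poly_eigenvalue_block[OF A2 A3])
  also have "\<dots> = [:-e, 1:] * (\<Prod>e\<leftarrow>es. [:-e, 1:])"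
    by (simp only: char_poly_similar[OF sim, symmetric] Cons.prems(2) list.map prod_list.Cons)
  finally have "char_poly A3 = (\<Prod>e\<leftarrow>es. [:-e, 1:])"
    using mult_left_cancel[of "[:-e, 1:]"] by simp
  from Cons.IH[OF A3 this] obtain U3 where
    U3: "similar_mat A3 U3" "upper_triangular U3" "diag_mat U3 = es" by blast
  have U3_carrier: "U3 \<in> carrier_mat k k" using similar_mat_carrier[OF A3 U3(1)] .
  obtain B0 where
    "similar_mat (four_block_mat (mat 1 1 (\<lambda>_. e)) A2 (0\<^sub>m k 1) A3)
       (four_block_mat (mat 1 1 (\<lambda>_. e)) B0 (0\<^sub>m k 1) U3)"
    using similar_mat_four_block_0_ex[OF similar_mat_refl[OF mat_carrier] U3(1) A2 mat_carrier A3]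
    by blast
  moreover have "upper_triangular (four_block_mat (mat 1 1 (\<lambda>_. e)) B0 (0\<^sub>m k 1) U3)"
    by (rule upper_triangular_four_block[OF mat_carrier U3_carrier _ U3(2)])
      (simp add: upper_triangular_def)
  moreover have "diag_mat (four_block_mat (mat 1 1 (\<lambda>_. e)) B0 (0\<^sub>m k 1) U3) = e # es"
    unfolding diag_four_block_mat[OF mat_carrier U3_carrier] U3(3) by (simp add: diag_mat_def)
  ultimately show ?case using similar_mat_trans[OF sim] by blast
qed

section \<open>Kronecker products\<close>

lemma kron_dims [simp]:
  "dim_row (kron A B) = dim_row A * dim_row B" "dim_col (kron A B) = dim_col A * dim_col B"
  by (auto simp: kron_def)

lemma kron_carrier:
  "A \<in> carrier_mat a1 a2 \<Longrightarrow> B \<in> carrier_mat b1 b2 \<Longrightarrow> kron A B \<in> carrier_mat (a1 * b1) (a2 * b2)"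
  by (auto simp: kron_def)

lemma index_kron [simp]:
  "i < dim_row A * dim_row B \<Longrightarrow> j < dim_col A * dim_col B \<Longrightarrow>
   kron A B $$ (i,j) = A $$ (i div dim_row B, j div dim_col B) * B $$ (i mod dim_row B, j mod dim_col B)"
  by (auto simp: kron_def)

lemma div_mod_less_mult:
  fixes i :: nat
  assumes "i < a * b"
  shows "i div b < a" "i mod b < b"
  using assms by (cases "b = 0", auto simp: less_mult_imp_div_less)+

lemma sum_lessThan_mult_div_mod:
  fixes a b :: nat
  shows "(\<Sum>k<a * b. f (k div b) (k mod b)) = (\<Sum>k1<a. \<Sum>k2<b. f k1 k2)"
proof -
  have "(\<Sum>k<a * b. f (k div b) (k mod b)) = (\<Sum>m<a. \<Sum>k\<in>{m*b..<m*b+b}. f (k div b) (k mod b))"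
    by (rule sum.nat_group[symmetric])
  also have "\<dots> = (\<Sum>k1<a. \<Sum>k2<b. f k1 k2)"
  proof (rule sum.cong[OF refl])
    fix m
    have "(\<Sum>k\<in>{m*b..<m*b+b}. f (k div b) (k mod b)) = (\<Sum>k\<in>{0 + m*b..<b + m*b}. f (k div b) (k mod b))"
      by (simp add: add.commute)
    also have "\<dots> = (\<Sum>k\<in>{0..<b}. f ((k + m*b) div b) ((k + m*b) mod b))"
      by (rule sum.shift_bounds_nat_ivl)
    also have "\<dots> = (\<Sum>k2<b. f m k2)"
      by (auto simp: atLeast0LessThan intro!: sum.cong)
    finally show "(\<Sum>k\<in>{m*b..<m*b+b}. f (k div b) (k mod b)) = (\<Sum>k2<b. f m k2)" .
  qed
  finally show ?thesis .
qed

lemma kron_mult: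
  fixes A :: "'a::comm_ring_1 mat"
  assumes A: "A \<in> carrier_mat a1 a2" and B: "B \<in> carrier_mat b1 b2"
    and C: "C \<in> carrier_mat a2 a3" and D: "D \<in> carrier_mat b2 b3"
  shows "kron A B * kron C D = kron (A * C) (B * D)"
proof (rule eq_matI)
  fix i j assume "i < dim_row (kron (A * C) (B * D))" "j < dim_col (kron (A * C) (B * D))"
  then have i: "i < a1 * b1" and j: "j < a3 * b3" using A B C D by auto
  note bounds = div_mod_less_mult[OF i] div_mod_less_mult[OF j]
  have "(kron A B * kron C D) $$ (i,j)
      = (\<Sum>k<a2 * b2. (A $$ (i div b1, k div b2) * C $$ (k div b2, j div b3))
                     * (B $$ (i mod b1, k mod b2) * D $$ (k mod b2, j mod b3)))"
    using i j A B C D by (auto simp: scalar_prod_def atLeast0LessThan div_mod_less_mult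
        intro!: sum.cong)
  also have "\<dots> = (\<Sum>k1<a2. \<Sum>k2<b2. (A $$ (i div b1, k1) * C $$ (k1, j div b3))
                     * (B $$ (i mod b1, k2) * D $$ (k2, j mod b3)))"
    by (rule sum_lessThan_mult_div_mod)
  also have "\<dots> = (\<Sum>k<a2. A $$ (i div b1, k) * C $$ (k, j div b3))
                 * (\<Sum>k<b2. B $$ (i mod b1, k) * D $$ (k, j mod b3))"
    by (simp add: sum_product)
  also have "\<dots> = kron (A * C) (B * D) $$ (i,j)"
    using i j A B C D bounds by (simp add: scalar_prod_def atLeast0LessThan)
  finally show "(kron A B * kron C D) $$ (i,j) = kron (A * C) (B * D) $$ (i,j)" .
qed (use assms in auto)

lemma kron_one: "kron (1\<^sub>m a) (1\<^sub>m b) = (1\<^sub>m (a * b) :: 'a::comm_ring_1 mat)"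
proof (rule eq_matI)
  fix i j assume "i < dim_row (1\<^sub>m (a * b) :: 'a mat)" "j < dim_col (1\<^sub>m (a * b) :: 'a mat)"
  then have i: "i < a * b" and j: "j < a * b" by auto
  have "i = j" if "i div b = j div b" "i mod b = j mod b"
    by (metis that div_mult_mod_eq)
  then show "kron (1\<^sub>m a) (1\<^sub>m b) $$ (i, j) = (1\<^sub>m (a * b) :: 'a mat) $$ (i, j)"
    using i j div_mod_less_mult[OF i] div_mod_less_mult[OF j] by simp
qed auto

lemma upper_triangular_kron:
  fixes A :: "'a::comm_ring_1 mat"
  assumes A: "A \<in> carrier_mat a a" and B: "B \<in> carrier_mat b b"
    and "upper_triangular A" "upper_triangular B"
  shows "upper_triangular (kron A B)"
proof (rule upper_triangularI)
  fix i j assume ji: "j < i" and "i < dim_row (kron A B)"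
  then have i: "i < a * b" and j: "j < a * b" using A B by auto
  note bounds = div_mod_less_mult[OF i] div_mod_less_mult[OF j]
  have "j div b \<le> i div b" using ji by (simp add: div_le_mono)
  moreover have "j mod b < i mod b" if "j div b = i div b"
  proof -
    from that have "j div b * b = i div b * b" by simp
    then show ?thesis using ji div_mult_mod_eq[of j b] div_mult_mod_eq[of i b] by linarith
  qed
  ultimately have "j div b < i div b \<or> j div b = i div b \<and> j mod b < i mod b" by linarith
  then show "kron A B $$ (i, j) = 0"
    using i j bounds assms by (auto simp: upper_triangularD)
qed

section \<open>Kronecker sums\<close>

text \<open>\<open>A \<oplus> B = I \<otimes> A + B \<otimes> I\<close>, with \<open>A\<close> as the fast-varying factor, matching
  the order used in \<open>M_s\<close> and \<open>T_RN\<close>.\<close>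
definition kron_sum :: "'a::comm_ring_1 mat \<Rightarrow> 'a mat \<Rightarrow> 'a mat" where
  "kron_sum A B = kron (1\<^sub>m (dim_row B)) A + kron B (1\<^sub>m (dim_row A))"

lemma kron_sum_carrier:
  "A \<in> carrier_mat n n \<Longrightarrow> B \<in> carrier_mat s s \<Longrightarrow> kron_sum A B \<in> carrier_mat (s * n) (s * n)"
  by (auto simp: kron_sum_def kron_def)

lemma T_RN_eq_kron_sum:
  "T_RN n s m a b c d e f = kron_sum (kron_sum (tridiag n c d) (tridiag s a b)) (tridiag m f e)"
  by (simp add: T_RN_def M_s_def kron_sum_def mult.commute)

lemma T_RN_carrier: "T_RN n s m a b c d e f \<in> carrier_mat (m * (s * n)) (m * (s * n))"
  unfolding T_RN_eq_kron_sum by (intro kron_sum_carrier tridiag_carrier)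

lemma kron_sum_conj:
  fixes A :: "'a::comm_ring_1 mat"
  assumes PQ: "P \<in> carrier_mat n n" "Q \<in> carrier_mat n n" "P * Q = 1\<^sub>m n"
    and P'Q': "P' \<in> carrier_mat s s" "Q' \<in> carrier_mat s s" "P' * Q' = 1\<^sub>m s"
    and U: "U \<in> carrier_mat n n" and V: "V \<in> carrier_mat s s"
  shows "kron P' P * kron_sum U V * kron Q' Q = kron_sum (P * U * Q) (P' * V * Q')"
proof -
  have conj: "kron P' P * kron X Y * kron Q' Q = kron (P' * X * Q') (P * Y * Q)"
    if "X \<in> carrier_mat s s" "Y \<in> carrier_mat n n" for X Y
    using that PQ P'Q' by (simp add: kron_mult[of _ s s _ n n _ s _ n])
  have KP: "kron P' P \<in> carrier_mat (s * n) (s * n)"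
    and KQ: "kron Q' Q \<in> carrier_mat (s * n) (s * n)"
    and K1: "kron (1\<^sub>m s) U \<in> carrier_mat (s * n) (s * n)"
    and K2: "kron V (1\<^sub>m n) \<in> carrier_mat (s * n) (s * n)"
    using PQ P'Q' U V by (auto intro: kron_carrier)
  have "kron P' P * kron_sum U V * kron Q' Q
      = kron P' P * kron (1\<^sub>m s) U * kron Q' Q + kron P' P * kron V (1\<^sub>m n) * kron Q' Q"
    unfolding kron_sum_def using U V
    by (simp add: mult_add_distrib_mat[OF KP K1 K2]
        add_mult_distrib_mat[OF mult_carrier_mat[OF KP K1] mult_carrier_mat[OF KP K2] KQ])
  then show ?thesis
    unfolding conj[OF one_carrier_mat U] conj[OF V one_carrier_mat] kron_sum_def
    using PQ P'Q' U V by simp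
qed

lemma similar_mat_kron_sum:
  fixes A :: "'a::comm_ring_1 mat"
  assumes A: "A \<in> carrier_mat n n" and B: "B \<in> carrier_mat s s"
    and "similar_mat A U" "similar_mat B V"
  shows "similar_mat (kron_sum A B) (kron_sum U V)"
proof -
  from \<open>similar_mat A U\<close> A obtain P Q where
    PQ: "{U, P, Q} \<subseteq> carrier_mat n n" "P * Q = 1\<^sub>m n" "Q * P = 1\<^sub>m n" "A = P * U * Q"
    unfolding similar_mat_def similar_mat_wit_def Let_def by auto
  from \<open>similar_mat B V\<close> B obtain P' Q' where
    P'Q': "{V, P', Q'} \<subseteq> carrier_mat s s" "P' * Q' = 1\<^sub>m s" "Q' * P' = 1\<^sub>m s" "B = P' * V * Q'"
    unfolding similar_mat_def similar_mat_wit_def Let_def by auto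
  show ?thesis
  proof (rule similar_matI[of _ _ "kron P' P" "kron Q' Q" "s * n"])
    show "kron P' P * kron Q' Q = 1\<^sub>m (s * n)" "kron Q' Q * kron P' P = 1\<^sub>m (s * n)"
      using PQ P'Q' by (simp_all add: kron_mult[of _ s s _ n n _ s _ n] kron_one)
    show "kron_sum A B = kron P' P * kron_sum U V * kron Q' Q"
      unfolding PQ(4) P'Q'(4) by (rule kron_sum_conj[symmetric]) (use PQ P'Q' in auto)
  qed (use A B PQ P'Q' in \<open>auto simp: kron_carrier kron_sum_carrier\<close>)
qed

lemma upper_triangular_kron_sum:
  fixes U :: "'a::comm_ring_1 mat"
  assumes U: "U \<in> carrier_mat n n" "upper_triangular U" and V: "V \<in> carrier_mat s s" "upper_triangular V"
  shows "upper_triangular (kron_sum U V)"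
proof (rule upper_triangularI)
  fix i j assume "j < i" "i < dim_row (kron_sum U V)"
  with upper_triangular_kron[OF one_carrier_mat U(1)] upper_triangular_kron[OF V(1) one_carrier_mat]
  show "kron_sum U V $$ (i, j) = 0"
    using U V by (auto simp: kron_sum_def upper_triangularD)
qed

lemma set_diag_mat_kron_sum:
  fixes U :: "'a::comm_ring_1 mat"
  assumes U: "U \<in> carrier_mat n n" and V: "V \<in> carrier_mat s s"
  shows "set (diag_mat (kron_sum U V)) = {x + y | x y. x \<in> set (diag_mat U) \<and> y \<in> set (diag_mat V)}"
proof -
  have diag: "kron_sum U V $$ (i,i) = U $$ (i mod n, i mod n) + V $$ (i div n, i div n)"
    if "i < s * n" for i
    using that U V div_mod_less_mult[OF that] by (simp add: kron_sum_def)
  have "set (diag_mat (kron_sum U V)) = (\<lambda>i. kron_sum U V $$ (i,i)) ` {..<s * n}"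
    using kron_sum_carrier[OF U V] by (auto simp: diag_mat_def)
  also have "\<dots> = (\<lambda>(j, l). U $$ (j,j) + V $$ (l,l)) ` ({..<n} \<times> {..<s})"
  proof (intro equalityI subsetI)
    fix x assume "x \<in> (\<lambda>i. kron_sum U V $$ (i,i)) ` {..<s * n}"
    then obtain i where "i < s * n" "x = kron_sum U V $$ (i,i)" by auto
    then show "x \<in> (\<lambda>(j, l). U $$ (j,j) + V $$ (l,l)) ` ({..<n} \<times> {..<s})"
      using diag div_mod_less_mult[of i s n] by (auto intro!: image_eqI[of _ _ "(i mod n, i div n)"])
  next
    fix x assume "x \<in> (\<lambda>(j, l). U $$ (j,j) + V $$ (l,l)) ` ({..<n} \<times> {..<s})"
    then obtain j l where jl: "j < n" "l < s" "x = U $$ (j,j) + V $$ (l,l)" by auto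
    have "l * n + j < Suc l * n" using jl by simp
    also have "\<dots> \<le> s * n" using jl by (intro mult_le_mono1, simp)
    finally have "l * n + j < s * n" .
    moreover have "(l * n + j) mod n = j" "(l * n + j) div n = l" using jl by auto
    ultimately show "x \<in> (\<lambda>i. kron_sum U V $$ (i,i)) ` {..<s * n}"
      using diag jl by (auto intro!: image_eqI[of _ _ "l * n + j"])
  qed
  also have "\<dots> = {x + y | x y. x \<in> set (diag_mat U) \<and> y \<in> set (diag_mat V)}"
    using U V by (fastforce simp: diag_mat_def)
  finally show ?thesis .
qed

section \<open>The determinant of a triple Kronecker sum\<close>

lemma invertible_mat_iff_det_neq_0:
  fixes A :: "'a::field mat"
  assumes A: "A \<in> carrier_mat n n"
  shows "invertible_mat A \<longleftrightarrow> det A \<noteq> 0"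
proof
  assume "invertible_mat A"
  then obtain B where AB: "A * B = 1\<^sub>m n" and "B * A = 1\<^sub>m (dim_row B)"
    using A unfolding invertible_mat_def inverts_mat_def by auto
  then have "B \<in> carrier_mat n n"
    using A by (metis carrier_matD carrier_matI index_mult_mat(2,3) index_one_mat(2,3))
  then have "det A * det B = 1" using det_mult[OF A, of B, symmetric] AB by simp
  then show "det A \<noteq> 0" by auto
next
  assume "det A \<noteq> 0"
  from det_non_zero_imp_unit[OF A this, of "()"]
  obtain B where "B \<in> carrier_mat n n" "B * A = 1\<^sub>m n" "A * B = 1\<^sub>m n"
    unfolding Units_def ring_mat_def by auto
  then show "invertible_mat A"
    using A unfolding invertible_mat_def inverts_mat_def by auto
qed

lemma det_upper_triangular_eq_0_iff:
  fixes U :: "'a::field mat"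
  assumes "U \<in> carrier_mat n n" "upper_triangular U"
  shows "det U = 0 \<longleftrightarrow> 0 \<in> set (diag_mat U)"
  using det_upper_triangular[OF assms(2,1)] by (simp add: prod_list_zero_iff)

lemma det_kron_sum3_eq_0_iff:
  fixes A B C :: "'a::field mat"
  assumes A: "A \<in> carrier_mat n n" "char_poly A = (\<Prod>x\<leftarrow>es. [:-x, 1:])"
    and B: "B \<in> carrier_mat s s" "char_poly B = (\<Prod>x\<leftarrow>fs. [:-x, 1:])"
    and C: "C \<in> carrier_mat m m" "char_poly C = (\<Prod>x\<leftarrow>gs. [:-x, 1:])"
  shows "det (kron_sum (kron_sum A B) C) = 0
    \<longleftrightarrow> (\<exists>x\<in>set es. \<exists>y\<in>set fs. \<exists>z\<in>set gs. x + y + z = 0)"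
proof -
  obtain U where U: "similar_mat A U" "upper_triangular U" "diag_mat U = es"
    using triangularize_split_char_poly[OF A] by blast
  obtain V where V: "similar_mat B V" "upper_triangular V" "diag_mat V = fs"
    using triangularize_split_char_poly[OF B] by blast
  obtain W where W: "similar_mat C W" "upper_triangular W" "diag_mat W = gs"
    using triangularize_split_char_poly[OF C] by blast
  have carrier: "U \<in> carrier_mat n n" "V \<in> carrier_mat s s" "W \<in> carrier_mat m m"
    using similar_mat_carrier A(1) B(1) C(1) U(1) V(1) W(1) by blast+
  have UV: "kron_sum U V \<in> carrier_mat (s * n) (s * n)" "upper_triangular (kron_sum U V)"
    using kron_sum_carrier upper_triangular_kron_sum carrier U V by blast+
  have sim: "similar_mat (kron_sum (kron_sum A B) C) (kron_sum (kron_sum U V) W)"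
    using similar_mat_kron_sum[OF kron_sum_carrier[OF A(1) B(1)] C(1)
        similar_mat_kron_sum[OF A(1) B(1) U(1) V(1)] W(1)] .
  have "det (kron_sum (kron_sum A B) C) = 0 \<longleftrightarrow> 0 \<in> set (diag_mat (kron_sum (kron_sum U V) W))"
    unfolding det_similar[OF sim]
    by (rule det_upper_triangular_eq_0_iff[OF kron_sum_carrier[OF UV(1) carrier(3)]
          upper_triangular_kron_sum[OF UV carrier(3) W(2)]])
  also have "\<dots> \<longleftrightarrow> (\<exists>x\<in>set es. \<exists>y\<in>set fs. \<exists>z\<in>set gs. x + y + z = 0)"
    unfolding set_diag_mat_kron_sum[OF UV(1) carrier(3)] set_diag_mat_kron_sum[OF carrier(1,2)]
      U(3) V(3) W(3) by auto
  finally show ?thesis .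
qed

section \<open>Reduction modulo \<open>p\<close>\<close>

lemma emb_field_hom:
  assumes "CHAR('e::field) = CARD('p::prime_card)"
  shows "field_hom (emb :: 'p mod_ring \<Rightarrow> 'e)"
proof unfold_locales
  fix x y :: "'p mod_ring"
  show "(emb (x + y) :: 'e) = emb x + emb y"
    using of_int_mod_CHAR[of "to_int_mod_ring x + to_int_mod_ring y", where 'a='e]
    by (simp add: emb_def to_int_mod_ring_add assms)
  show "(emb (x * y) :: 'e) = emb x * emb y"
    using of_int_mod_CHAR[of "to_int_mod_ring x * to_int_mod_ring y", where 'a='e]
    by (simp add: emb_def to_int_mod_ring_mult assms)
qed (simp_all add: emb_def)

context comm_ring_hom
begin

lemma map_mat_kron_sum:
  assumes "A \<in> carrier_mat n n" "B \<in> carrier_mat s s"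
  shows "map_mat hom (kron_sum A B) = kron_sum (map_mat hom A) (map_mat hom B)"
  using assms by (intro eq_matI, auto simp: kron_sum_def kron_def hom_add hom_mult div_mod_less_mult)

lemma map_mat_tridiag: "map_mat hom (tridiag k t1 t2) = tridiag k (hom t1) (hom t2)"
  by (rule eq_matI, auto simp: tridiag_def)

lemma map_mat_T_RN:
  "map_mat hom (T_RN n s m a b c d e f)
    = kron_sum (kron_sum (tridiag n (hom c) (hom d)) (tridiag s (hom a) (hom b))) (tridiag m (hom f) (hom e))"
  unfolding T_RN_eq_kron_sum
  by (subst map_mat_kron_sum[OF kron_sum_carrier[OF tridiag_carrier tridiag_carrier] tridiag_carrier],
      subst map_mat_kron_sum[OF tridiag_carrier tridiag_carrier], simp add: map_mat_tridiag)

lemma char_poly_map_tridiag: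
  "char_poly (tridiag k (hom t1) (hom t2)) = map_poly hom (gpoly k t1 t2)"
  using char_poly_hom[OF tridiag_carrier, of k t1 t2]
  unfolding map_mat_tridiag char_poly_tridiag .

lemma monic_map_gpoly: "monic (map_poly hom (gpoly k t1 t2))"
  using degree_monic_char_poly[OF tridiag_carrier, of k "hom t1" "hom t2"]
  unfolding char_poly_map_tridiag by simp

end

lemma splits_monic_eq_prod_linear:
  fixes q :: "'a::field poly"
  assumes "splits q" "monic q"
  obtains es where "q = (\<Prod>x\<leftarrow>es. [:-x, 1:])"
proof -
  from assms(1) obtain c rs where q: "q = smult c (prod_mset (image_mset (\<lambda>r. [:-r, 1:]) rs))"
    unfolding splits_def by auto
  obtain es where "rs = mset es" by (metis ex_mset)
  then have prod: "prod_mset (image_mset (\<lambda>r. [:-r, 1:]) rs) = (\<Prod>x\<leftarrow>es. [:-x, 1:])"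
    by (simp add: prod_mset_prod_list flip: mset_map)
  have "monic (\<Prod>x\<leftarrow>es. [:-x, 1:])" by (rule monic_prod_list, auto)
  then have "lead_coeff q = c" unfolding q prod lead_coeff_smult by simp
  with assms(2) have "c = 1" by simp
  with q prod show thesis using that by simp
qed

lemma roots_prod_linear: "roots (\<Prod>x\<leftarrow>es. [:-x, 1:]) = set (es :: 'a::field list)"
  unfolding roots_def poly_prod_list by (induct es, auto)

theorem corollary4p3:
  fixes a b c d e f :: "'p::prime_card mod_ring"
    and n s m :: nat
  assumes "n \<ge> 2" "s \<ge> 2" "m \<ge> 2"
    and "is_splitting_field TYPE('e::field) {gpoly n c d, gpoly s a b, gpoly m e f}"
  shows "invertible_mat (T_RN n s m a b c d e f) \<longleftrightarrow>
    (0::'e) \<notin> {x1 + x2 + x3 | x1 x2 x3.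
        x1 \<in> roots (map_poly emb (gpoly n c d)) \<and>
        x2 \<in> roots (map_poly emb (gpoly s a b)) \<and>
        x3 \<in> roots (map_poly emb (gpoly m e f))}"
proof -
  from assms(4) have char: "CHAR('e) = CARD('p)"
    and splits: "\<And>q. q \<in> {gpoly n c d, gpoly s a b, gpoly m e f} \<Longrightarrow>
        splits (map_poly (emb :: 'p mod_ring \<Rightarrow> 'e) q)"
    unfolding is_splitting_field_def by auto
  interpret field_hom "emb :: 'p mod_ring \<Rightarrow> 'e" using emb_field_hom[OF char] .
  obtain es fs gs where
    es: "map_poly emb (gpoly n c d) = (\<Prod>x\<leftarrow>es. [:-x, 1:] :: 'e poly)" and
    fs: "map_poly emb (gpoly s a b) = (\<Prod>x\<leftarrow>fs. [:-x, 1:] :: 'e poly)" and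
    gs: "map_poly emb (gpoly m e f) = (\<Prod>x\<leftarrow>gs. [:-x, 1:] :: 'e poly)"
    using splits_monic_eq_prod_linear[OF splits monic_map_gpoly] by (metis insertI1 insertI2)
  have "det (map_mat (emb :: 'p mod_ring \<Rightarrow> 'e) (T_RN n s m a b c d e f)) = 0
      \<longleftrightarrow> (\<exists>x\<in>set es. \<exists>y\<in>set fs. \<exists>z\<in>set gs. x + y + z = 0)"
    unfolding map_mat_T_RN
    by (rule det_kron_sum3_eq_0_iff[OF tridiag_carrier _ tridiag_carrier _ tridiag_carrier])
      (simp_all add: char_poly_map_tridiag gpoly_commute[of m f] es fs gs)
  moreover have "invertible_mat (T_RN n s m a b c d e f) \<longleftrightarrow> det (T_RN n s m a b c d e f) \<noteq> 0"
    by (rule invertible_mat_iff_det_neq_0[OF T_RN_carrier])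
  ultimately show ?thesis
    unfolding es fs gs roots_prod_linear by auto
qed

end
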